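(* Let $X$ be a compact Hausdorff space and let $M$ be a self-conjugate function space on $X$. Then for any three pairwise distinct points $x,x',z\in Ch(M)$ there exists $h\in M$ such that $|h(x)|\neq|h(x')|$ and $h(z)=0$.
   Context: $C(X)$ denotes the space of continuous scalar-valued (real or complex) functions on $X$ with the supremum norm. A function space on $X$ is a linear subspace of $C(X)$ containing the constant function $1$ and separating the points of $X$; it is self-conjugate if $\bar f\in M$ whenever $f\in M$. For a linear subspace $A\subseteq C(X)$, its Choquet boundary $Ch(A)$ is the set of points $x\in X$ such that the evaluation functional $\delta_x:A\to$ scalars, $g\mapsto g(x)$, is an extreme point of the closed unit ball of the dual space of $(A,\|\cdot\|)$. *)

theory Defs
  imports "HOL-Analysis.Analysis"
begin

text \<open>Scalar field 'k is real or complex (both instances of real_normed_field).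
  C(X) = continuous 'k-valued functions on the topological space X.\<close>

definition Cfun :: "'a topology \<Rightarrow> ('a \<Rightarrow> 'k::real_normed_field) set" where
  "Cfun X = {f. continuous_map X euclidean f}"

definition supnorm :: "'a topology \<Rightarrow> ('a \<Rightarrow> 'k::real_normed_field) \<Rightarrow> real" where
  "supnorm X f = (SUP x\<in>topspace X. norm (f x))"

definition linear_subspace_fun :: "'a topology \<Rightarrow> ('a \<Rightarrow> 'k::real_normed_field) set \<Rightarrow> bool" where
  "linear_subspace_fun X A \<longleftrightarrow> A \<subseteq> Cfun X \<and> (\<lambda>x. 0) \<in> A \<and>
     (\<forall>f\<in>A. \<forall>g\<in>A. (\<lambda>x. f x + g x) \<in> A) \<and>
     (\<forall>c. \<forall>f\<in>A. (\<lambda>x. c * f x) \<in> A)"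

definition function_space :: "'a topology \<Rightarrow> ('a \<Rightarrow> 'k::real_normed_field) set \<Rightarrow> bool" where
  "function_space X M \<longleftrightarrow> linear_subspace_fun X M \<and> (\<lambda>x. 1) \<in> M \<and>
     (\<forall>x\<in>topspace X. \<forall>y\<in>topspace X. x \<noteq> y \<longrightarrow> (\<exists>f\<in>M. f x \<noteq> f y))"

definition self_conjugate :: "('a \<Rightarrow> complex) set \<Rightarrow> bool" where
  "self_conjugate M \<longleftrightarrow> (\<forall>f\<in>M. (\<lambda>x. cnj (f x)) \<in> M)"

text \<open>Closed unit ball of the dual of (A, sup norm): 'k-linear functionals on A
  of norm at most 1.  Functionals are identified by their values on A.\<close>

definition dual_ball :: "'a topology \<Rightarrow> ('a \<Rightarrow> 'k::real_normed_field) set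
     \<Rightarrow> (('a \<Rightarrow> 'k) \<Rightarrow> 'k) set" where
  "dual_ball X A = {\<phi>.
     (\<forall>f\<in>A. \<forall>g\<in>A. \<phi> (\<lambda>x. f x + g x) = \<phi> f + \<phi> g) \<and>
     (\<forall>c. \<forall>f\<in>A. \<phi> (\<lambda>x. c * f x) = c * \<phi> f) \<and>
     (\<forall>f\<in>A. norm (\<phi> f) \<le> supnorm X f)}"

definition dual_ball_extreme :: "'a topology \<Rightarrow> ('a \<Rightarrow> 'k::real_normed_field) set
     \<Rightarrow> (('a \<Rightarrow> 'k) \<Rightarrow> 'k) \<Rightarrow> bool" where
  "dual_ball_extreme X A \<phi> \<longleftrightarrow> \<phi> \<in> dual_ball X A \<and>
     (\<forall>\<psi>1\<in>dual_ball X A. \<forall>\<psi>2\<in>dual_ball X A. \<forall>t::real. 0 < t \<and> t < 1 \<and>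
        (\<forall>f\<in>A. \<phi> f = of_real t * \<psi>1 f + of_real (1 - t) * \<psi>2 f)
        \<longrightarrow> (\<forall>f\<in>A. \<psi>1 f = \<psi>2 f))"

definition choquet_boundary :: "'a topology \<Rightarrow> ('a \<Rightarrow> 'k::real_normed_field) set \<Rightarrow> 'a set" where
  "choquet_boundary X A = {x\<in>topspace X. dual_ball_extreme X A (\<lambda>g. g x)}"

end

theory Submission
  imports Defs
begin

text \<open>Suppose every \<open>h \<in> M\<close> vanishing at \<open>z\<close> has \<open>|h x| = |h x'|\<close>. Applied to \<open>f - f z\<close> this
  gives \<open>|f x - f z| = |f x' - f z|\<close> for all \<open>f \<in> M\<close>, and by polarization (using self-conjugacy
  to pass to real parts in the complex case) together with a function separating \<open>x\<close> and \<open>x'\<close>,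
  \<open>f z = (f x + f x')/2\<close> for all \<open>f \<in> M\<close>. Then \<open>\<delta>\<^sub>z\<close> is the midpoint of the distinct elements
  \<open>\<delta>\<^sub>x\<close>, \<open>\<delta>\<^sub>x'\<close> of the dual unit ball, contradicting \<open>z \<in> Ch(M)\<close>.\<close>

lemma function_space_add:
  "function_space X M \<Longrightarrow> f \<in> M \<Longrightarrow> g \<in> M \<Longrightarrow> (\<lambda>w. f w + g w) \<in> M"
  by (simp add: function_space_def linear_subspace_fun_def)

lemma function_space_scale:
  "function_space X M \<Longrightarrow> f \<in> M \<Longrightarrow> (\<lambda>w. c * f w) \<in> M"
  by (simp add: function_space_def linear_subspace_fun_def)

lemma function_space_diff_const:
  assumes "function_space X M" "f \<in> M"
  shows "(\<lambda>w. f w - c) \<in> M"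
proof -
  have "(\<lambda>w. (- c) * 1) \<in> M"
    using assms(1) function_space_scale[of X M "\<lambda>_. 1"] by (simp add: function_space_def)
  from function_space_add[OF assms this] show ?thesis by simp
qed

lemma function_space_separates:
  "function_space X M \<Longrightarrow> x \<in> topspace X \<Longrightarrow> x' \<in> topspace X \<Longrightarrow> x \<noteq> x'
    \<Longrightarrow> \<exists>k\<in>M. k x \<noteq> k x'"
  by (simp add: function_space_def)

lemma evaluation_in_dual_ball:
  fixes A :: "('a \<Rightarrow> 'k::real_normed_field) set"
  assumes "compact_space X" "A \<subseteq> Cfun X" "y \<in> topspace X"
  shows "(\<lambda>g. g y) \<in> dual_ball X A"
proof -
  have "norm (f y) \<le> supnorm X f" if "f \<in> A" for f
  proof -
    have "continuous_map X euclidean (\<lambda>x. norm (f x))"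
      using assms(2) that by (auto simp: Cfun_def intro: continuous_map_norm)
    then have "compactin euclidean ((\<lambda>x. norm (f x)) ` topspace X)"
      using assms(1) image_compactin compact_space_def by blast
    then have "bdd_above ((\<lambda>x. norm (f x)) ` topspace X)"
      by (simp add: compact_imp_bounded bounded_imp_bdd_above)
    then show ?thesis
      unfolding supnorm_def using assms(3) by (rule cSUP_upper2) simp
  qed
  then show ?thesis by (simp add: dual_ball_def)
qed

lemma choquet_boundary_not_midpoint:
  fixes M :: "('a \<Rightarrow> 'k::real_normed_field) set"
  assumes "compact_space X" "function_space X M" "z \<in> choquet_boundary X M"
    and "x \<in> topspace X" "x' \<in> topspace X" "x \<noteq> x'"
  shows "\<not> (\<forall>f\<in>M. f x + f x' = 2 * f z)"
proof
  assume mid: "\<forall>f\<in>M. f x + f x' = 2 * f z"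
  have extreme: "\<And>\<psi>1 \<psi>2 t. \<psi>1 \<in> dual_ball X M \<Longrightarrow> \<psi>2 \<in> dual_ball X M \<Longrightarrow> 0 < t \<Longrightarrow> t < 1
      \<Longrightarrow> \<forall>f\<in>M. f z = of_real t * \<psi>1 f + of_real (1 - t) * \<psi>2 f \<Longrightarrow> \<forall>f\<in>M. \<psi>1 f = \<psi>2 f"
    using assms(3) unfolding choquet_boundary_def dual_ball_extreme_def by blast
  have "M \<subseteq> Cfun X"
    using assms(2) by (simp add: function_space_def linear_subspace_fun_def)
  then have "(\<lambda>g. g x) \<in> dual_ball X M" "(\<lambda>g. g x') \<in> dual_ball X M"
    using assms(4,5) by (simp_all add: evaluation_in_dual_ball assms(1))
  moreover have "\<forall>f\<in>M. f z = of_real (1/2) * f x + of_real (1 - 1/2) * f x'"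
  proof
    fix f assume "f \<in> M"
    with mid have "f z = (f x + f x') / 2" by (simp add: eq_divide_eq ac_simps)
    then show "f z = of_real (1/2) * f x + of_real (1 - 1/2) * f x'"
      by (simp add: add_divide_distrib)
  qed
  ultimately have "\<forall>f\<in>M. f x = f x'"
    using extreme[of "\<lambda>g. g x" "\<lambda>g. g x'" "1/2"] by simp
  with function_space_separates[OF assms(2,4-6)] show False by blast
qed

lemma equidistant_from_value_at:
  fixes M :: "('a \<Rightarrow> 'k::real_normed_field) set"
  assumes "function_space X M" "\<not> (\<exists>h\<in>M. norm (h x) \<noteq> norm (h x') \<and> h z = 0)" "f \<in> M"
  shows "norm (f x - f z) = norm (f x' - f z)"
  using assms function_space_diff_const[OF assms(1,3), of "f z"] by auto

text \<open>Real polarization: \<open>|a + c| = |b + d|\<close> together with \<open>|a| = |b|\<close>, \<open>|c| = |d|\<close> forces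
  \<open>a c = b d\<close>; comparing an arbitrary pair with a pair \<open>(a, b)\<close>, \<open>a \<noteq> b\<close>, hence \<open>b = -a \<noteq> 0\<close>,
  gives \<open>d = -c\<close>.\<close>

lemma additive_equal_abs_pairs_opposite:
  fixes P :: "(real \<times> real) set"
  assumes add: "\<And>p q. p \<in> P \<Longrightarrow> q \<in> P \<Longrightarrow> (fst p + fst q, snd p + snd q) \<in> P"
    and abs_eq: "\<And>p. p \<in> P \<Longrightarrow> \<bar>fst p\<bar> = \<bar>snd p\<bar>"
    and "(a, b) \<in> P" "a \<noteq> b" "(c, d) \<in> P"
  shows "c = - d"
proof -
  have sq: "(fst p)\<^sup>2 = (snd p)\<^sup>2" if "p \<in> P" for p
    by (metis abs_eq[OF that] power2_abs)
  have "a * c = b * d"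
    using sq[OF assms(3)] sq[OF assms(5)] sq[OF add[OF assms(3,5)]]
    by (simp add: power2_eq_square algebra_simps)
  moreover have "b = - a" "a \<noteq> 0"
    using abs_eq[OF assms(3)] \<open>a \<noteq> b\<close> by (auto simp: abs_if split: if_splits)
  ultimately have "a * c = a * (- d)" by simp
  with \<open>a \<noteq> 0\<close> show ?thesis by (metis mult_left_cancel)
qed

lemma real_function_space_midpoint:
  fixes M :: "('a \<Rightarrow> real) set"
  assumes fs: "function_space X M" and "x \<in> topspace X" "x' \<in> topspace X" "x \<noteq> x'"
    and equi: "\<And>f. f \<in> M \<Longrightarrow> \<bar>f x - f z\<bar> = \<bar>f x' - f z\<bar>"
    and "f \<in> M"
  shows "f x + f x' = 2 * f z"
proof -
  define P where "P = (\<lambda>f. (f x - f z, f x' - f z)) ` M"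
  have add: "(fst p + fst q, snd p + snd q) \<in> P" if p: "p \<in> P" and q: "q \<in> P" for p q
  proof -
    obtain g h where "g \<in> M" "h \<in> M" "p = (g x - g z, g x' - g z)" "q = (h x - h z, h x' - h z)"
      using p q unfolding P_def by blast
    then show ?thesis unfolding P_def
      by (auto simp: algebra_simps intro!: image_eqI[where x="\<lambda>w. g w + h w"] function_space_add[OF fs])
  qed
  have abs_eq: "\<bar>fst p\<bar> = \<bar>snd p\<bar>" if "p \<in> P" for p
    using that equi unfolding P_def by auto
  obtain k where "k \<in> M" "k x \<noteq> k x'"
    using function_space_separates[OF fs assms(2-4)] by blast
  moreover from this have "(k x - k z, k x' - k z) \<in> P" "(f x - f z, f x' - f z) \<in> P"
    using \<open>f \<in> M\<close> unfolding P_def by blast+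
  ultimately have "f x - f z = - (f x' - f z)"
    by (intro additive_equal_abs_pairs_opposite[OF add abs_eq, of "k x - k z" "k x' - k z"]) simp_all
  then show ?thesis by simp
qed

lemma self_conjugate_Re:
  assumes fs: "function_space X M" and "self_conjugate M" "f \<in> M"
  shows "(\<lambda>w. complex_of_real (Re (f w))) \<in> M"
proof -
  have "(\<lambda>w. f w + cnj (f w)) \<in> M"
    using assms by (simp add: self_conjugate_def function_space_add)
  from function_space_scale[OF fs this, of "1/2"]
  show ?thesis by (simp add: complex_add_cnj)
qed

lemma complex_function_space_midpoint:
  fixes M :: "('a \<Rightarrow> complex) set"
  assumes fs: "function_space X M" and sc: "self_conjugate M"
    and "x \<in> topspace X" "x' \<in> topspace X" "x \<noteq> x'"
    and equi: "\<And>f. f \<in> M \<Longrightarrow> cmod (f x - f z) = cmod (f x' - f z)"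
    and "f \<in> M"
  shows "f x + f x' = 2 * f z"
proof -
  define P where "P = (\<lambda>f. (Re (f x - f z), Re (f x' - f z))) ` M"
  \<comment> \<open>\<open>Re (- \<i> * w) = Im w\<close>: real parts of rotated functions recover imaginary parts\<close>
  have rot: "(\<lambda>w. - \<i> * g w) \<in> M" if "g \<in> M" for g
    using function_space_scale[OF fs that] .
  have add: "(fst p + fst q, snd p + snd q) \<in> P" if p: "p \<in> P" and q: "q \<in> P" for p q
  proof -
    obtain g h where "g \<in> M" "h \<in> M"
      "p = (Re (g x - g z), Re (g x' - g z))" "q = (Re (h x - h z), Re (h x' - h z))"
      using p q unfolding P_def by blast
    then show ?thesis unfolding P_def
      by (auto simp: algebra_simps intro!: image_eqI[where x="\<lambda>w. g w + h w"] function_space_add[OF fs])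
  qed
  have abs_eq: "\<bar>fst p\<bar> = \<bar>snd p\<bar>" if p: "p \<in> P" for p
  proof -
    obtain g where "g \<in> M" "p = (Re (g x - g z), Re (g x' - g z))"
      using p unfolding P_def by blast
    with equi[OF self_conjugate_Re[OF fs sc \<open>g \<in> M\<close>]] show ?thesis
      by (simp flip: of_real_diff)
  qed
  obtain k where k: "k \<in> M" "k x \<noteq> k x'"
    using function_space_separates[OF fs assms(3-5)] by blast
  obtain a b where "(a, b) \<in> P" "a \<noteq> b"
  proof (cases "Re (k x) = Re (k x')")
    case True
    then have "Im (k x) \<noteq> Im (k x')"
      using k(2) complex_eq_iff by blast
    moreover have "(Im (k x - k z), Im (k x' - k z)) \<in> P"
      unfolding P_def using rot[OF k(1)] by (force intro: image_eqI)
    ultimately show ?thesis using that by simp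
  next
    case False
    moreover have "(Re (k x - k z), Re (k x' - k z)) \<in> P"
      unfolding P_def using k(1) by blast
    ultimately show ?thesis using that by simp
  qed
  then have opp: "Re (g x - g z) = - Re (g x' - g z)" if "g \<in> M" for g
    using additive_equal_abs_pairs_opposite[OF add abs_eq] that unfolding P_def by blast
  have "f x - f z = - (f x' - f z)"
    using opp[OF \<open>f \<in> M\<close>] opp[OF rot[OF \<open>f \<in> M\<close>]] by (simp add: complex_eq_iff)
  then show ?thesis by simp
qed

theorem mainTheorem3:
  shows "(\<forall>(X::'a topology) (M::('a \<Rightarrow> real) set) x x' z.
            compact_space X \<and> Hausdorff_space X \<and> function_space X M \<and>
            x \<in> choquet_boundary X M \<and> x' \<in> choquet_boundary X M \<and> z \<in> choquet_boundary X M \<and>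
            x \<noteq> x' \<and> x \<noteq> z \<and> x' \<noteq> z
            \<longrightarrow> (\<exists>h\<in>M. \<bar>h x\<bar> \<noteq> \<bar>h x'\<bar> \<and> h z = 0))
       \<and> (\<forall>(X::'a topology) (M::('a \<Rightarrow> complex) set) x x' z.
            compact_space X \<and> Hausdorff_space X \<and> function_space X M \<and> self_conjugate M \<and>
            x \<in> choquet_boundary X M \<and> x' \<in> choquet_boundary X M \<and> z \<in> choquet_boundary X M \<and>
            x \<noteq> x' \<and> x \<noteq> z \<and> x' \<noteq> z
            \<longrightarrow> (\<exists>h\<in>M. cmod (h x) \<noteq> cmod (h x') \<and> h z = 0))"
proof (intro conjI allI impI; elim conjE; rule ccontr)
  fix X :: "'a topology" and M :: "('a \<Rightarrow> real) set" and x x' z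
  assume X: "compact_space X" and fs: "function_space X M" and "x \<noteq> x'"
    and "x \<in> choquet_boundary X M" "x' \<in> choquet_boundary X M" "z \<in> choquet_boundary X M"
    and "\<not> (\<exists>h\<in>M. \<bar>h x\<bar> \<noteq> \<bar>h x'\<bar> \<and> h z = 0)"
  moreover from this have "x \<in> topspace X" "x' \<in> topspace X"
    by (simp_all add: choquet_boundary_def)
  ultimately have "\<forall>f\<in>M. f x + f x' = 2 * f z"
    by (intro ballI real_function_space_midpoint[OF fs])
      (simp_all add: equidistant_from_value_at[OF fs, unfolded real_norm_def])
  with choquet_boundary_not_midpoint[OF X fs \<open>z \<in> choquet_boundary X M\<close>]
  show False using \<open>x \<in> topspace X\<close> \<open>x' \<in> topspace X\<close> \<open>x \<noteq> x'\<close> by blast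
next
  fix X :: "'a topology" and M :: "('a \<Rightarrow> complex) set" and x x' z
  assume X: "compact_space X" and fs: "function_space X M" and "self_conjugate M" "x \<noteq> x'"
    and "x \<in> choquet_boundary X M" "x' \<in> choquet_boundary X M" "z \<in> choquet_boundary X M"
    and "\<not> (\<exists>h\<in>M. cmod (h x) \<noteq> cmod (h x') \<and> h z = 0)"
  moreover from this have "x \<in> topspace X" "x' \<in> topspace X"
    by (simp_all add: choquet_boundary_def)
  ultimately have "\<forall>f\<in>M. f x + f x' = 2 * f z"
    by (intro ballI complex_function_space_midpoint[OF fs])
      (simp_all add: equidistant_from_value_at[OF fs])
  with choquet_boundary_not_midpoint[OF X fs \<open>z \<in> choquet_boundary X M\<close>]
  show False using \<open>x \<in> topspace X\<close> \<open>x' \<in> topspace X\<close> \<open>x \<noteq> x'\<close> by blast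
qed

end
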